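(* $E_{range}<^{\mathrm{fin}}_{\mathrm{Learn}}E_0$: every finite $E_{range}$-learnable family of structures is $E_0$-learnable, and there is a finite family (namely $\{\omega,\omega^*\}$) that is $E_0$-learnable but not $E_{range}$-learnable.
   Context: All structures are countable, have domain $\mathbb{N}$, are in a finite relational signature, and are identified with their atomic diagrams (elements of $2^{\mathbb{N}}$). A family of structures is a countable set of pairwise nonisomorphic such structures. $\mathrm{LD}(\mathfrak{K})\subseteq 2^{\mathbb{N}}$ is the set of structures with domain $\mathbb{N}$ isomorphic to a member of $\mathfrak{K}$ (subspace topology). For an equivalence relation $E$ on a space $X$, $\mathfrak{K}$ is $E$-learnable if there is a continuous $\Gamma:\mathrm{LD}(\mathfrak{K})\to X$ with $\mathcal{S}\cong\mathcal{S}'\iff\Gamma(\mathcal{S})\,E\,\Gamma(\mathcal{S}')$ for all $\mathcal{S},\mathcal{S}'\in\mathrm{LD}(\mathfrak{K})$. On Baire space $\mathbb{N}^{\mathbb{N}}$: $p\,E_0\,q\iff\exists m\,\forall n\ge m\ p(n)=q(n)$; $p\,E_{range}\,q\iff\{p(m):m\}=\{q(m):m\}$. $\omega$ and $\omega^*$ are the linear orders of the natural numbers and of the negative integers. For criteria $X,Y$: $X\leq^{\mathrm{fin}}_{\mathrm{Learn}}Y$ means every finite $X$-learnable family is $Y$-learnable, and $<^{\mathrm{fin}}_{\mathrm{Learn}}$ means $\leq^{\mathrm{fin}}_{\mathrm{Learn}}$ but not the converse. *)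

theory Defs
  imports "HOL-Analysis.Analysis"
begin

text \<open>A finite relational signature is a list of arities: relation symbol i (for i below
  the length of the list) has arity sig ! i.  A structure with domain the natural numbers
  is identified with its atomic diagram, an element of the Cantor space
  (nat \<times> nat list) \<Rightarrow> bool (a countable product of copies of the discrete space bool,
  i.e. homeomorphic to Cantor space): D (i, xs) says that relation i holds of the tuple xs.  Equality atoms are omitted since
  they are the same for all structures with domain nat.\<close>

type_synonym diagram = "nat \<times> nat list \<Rightarrow> bool"

definition is_structure :: "nat list \<Rightarrow> diagram \<Rightarrow> bool" where
  "is_structure sig D \<longleftrightarrow>
     (\<forall>i xs. D (i, xs) \<longrightarrow> i < length sig \<and> length xs = sig ! i)"

definition iso :: "diagram \<Rightarrow> diagram \<Rightarrow> bool" where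
  "iso D D' \<longleftrightarrow> (\<exists>f :: nat \<Rightarrow> nat. bij f \<and> (\<forall>i xs. D (i, xs) = D' (i, map f xs)))"

definition family :: "nat list \<Rightarrow> diagram set \<Rightarrow> bool" where
  "family sig K \<longleftrightarrow> countable K \<and> (\<forall>A\<in>K. is_structure sig A) \<and>
     (\<forall>A\<in>K. \<forall>B\<in>K. iso A B \<longrightarrow> A = B)"

definition LD :: "nat list \<Rightarrow> diagram set \<Rightarrow> diagram set" where
  "LD sig K = {S. is_structure sig S \<and> (\<exists>A\<in>K. iso S A)}"

definition learnable :: "((nat \<Rightarrow> nat) \<Rightarrow> (nat \<Rightarrow> nat) \<Rightarrow> bool) \<Rightarrow> nat list \<Rightarrow> diagram set \<Rightarrow> bool" where
  "learnable E sig K \<longleftrightarrow>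
     (\<exists>\<Gamma> :: diagram \<Rightarrow> (nat \<Rightarrow> nat). continuous_on (LD sig K) \<Gamma> \<and>
        (\<forall>S\<in>LD sig K. \<forall>S'\<in>LD sig K. iso S S' \<longleftrightarrow> E (\<Gamma> S) (\<Gamma> S')))"

definition E0 :: "(nat \<Rightarrow> nat) \<Rightarrow> (nat \<Rightarrow> nat) \<Rightarrow> bool" where
  "E0 p q \<longleftrightarrow> (\<exists>m. \<forall>n\<ge>m. p n = q n)"

definition Erange :: "(nat \<Rightarrow> nat) \<Rightarrow> (nat \<Rightarrow> nat) \<Rightarrow> bool" where
  "Erange p q \<longleftrightarrow> range p = range q"

text \<open>Linear orders as structures in the signature with one binary relation (the order \<le>).
  omega: the natural numbers; omega_star: the negative integers, with n coding -(n+1).\<close>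
definition order_sig :: "nat list" where "order_sig = [2]"

definition omega :: diagram where
  "omega = (\<lambda>(i, xs). i = 0 \<and> length xs = 2 \<and> xs ! 0 \<le> xs ! 1)"

definition omega_star :: diagram where
  "omega_star = (\<lambda>(i, xs). i = 0 \<and> length xs = 2 \<and>
                    (- int (xs ! 0) - 1) \<le> (- int (xs ! 1) - 1))"

end

theory Submission imports Defs "HOL-Library.Nat_Bijection" begin

text \<open>If \<Gamma> is an \<open>E\<^sub>r\<^sub>a\<^sub>n\<^sub>g\<^sub>e\<close>-learner for a finite family, only finitely many ranges of \<Gamma>
  occur, and they are already distinguished by their traces on some initial segment
  \<open>{..N}\<close>. The code of the finite set \<open>\<Gamma> S ` {..n} \<inter> {..N}\<close> therefore stabilises, as
  \<open>n\<close> grows, at a value determining the isomorphism type of \<open>S\<close>: an \<open>E\<^sub>0\<close>-learner.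

  For \<open>{\<omega>, \<omega>\<^sup>*}\<close>, an \<open>E\<^sub>0\<close>-learner compares how many predecessors and successors of \<open>0\<close>
  have been seen so far. There is no \<open>E\<^sub>r\<^sub>a\<^sub>n\<^sub>g\<^sub>e\<close>-learner: reversing an initial segment
  turns any finite part of \<open>\<omega>\<close> into a part of a copy of \<open>\<omega>\<^sup>*\<close> and vice versa, so by
  continuity every value output on \<open>\<omega>\<close> is also output on a copy of \<open>\<omega>\<^sup>*\<close>, and the ranges
  on \<open>\<omega>\<close> and \<open>\<omega>\<^sup>*\<close> coincide.\<close>

section \<open>Cylinders in product spaces\<close>

definition cylinder :: "('a \<Rightarrow> 'b) \<Rightarrow> 'a set \<Rightarrow> ('a \<Rightarrow> 'b) set" where
  "cylinder x F = {y. \<forall>a\<in>F. y a = x a}"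

lemma open_cylinder:
  fixes x :: "'a \<Rightarrow> 'b::discrete_topology"
  assumes "finite F"
  shows "open (cylinder x F)"
proof -
  have "open {y. \<forall>a\<in>F. y (id a) \<in> {x a}}"
    by (rule product_topology_basis') (auto simp: assms open_discrete)
  then show ?thesis
    unfolding cylinder_def by simp
qed

lemma open_contains_cylinder:
  fixes x :: "'a \<Rightarrow> 'b::topological_space"
  assumes "open U" "x \<in> U"
  obtains F where "finite F" "cylinder x F \<subseteq> U"
proof -
  have "openin (product_topology (\<lambda>_. euclidean) UNIV) U"
    using assms(1) by (simp add: open_fun_def)
  from product_topology_open_contains_basis[OF this assms(2)]
  obtain X where X: "x \<in> (\<Pi>\<^sub>E i\<in>UNIV. X i)" "finite {i. X i \<noteq> UNIV}" "(\<Pi>\<^sub>E i\<in>UNIV. X i) \<subseteq> U"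
    by auto
  have "cylinder x {i. X i \<noteq> UNIV} \<subseteq> (\<Pi>\<^sub>E i\<in>UNIV. X i)"
  proof
    fix y assume y: "y \<in> cylinder x {i. X i \<noteq> UNIV}"
    have "y i \<in> X i" for i
      using y X(1) by (cases "X i = UNIV") (auto simp: cylinder_def)
    then show "y \<in> (\<Pi>\<^sub>E i\<in>UNIV. X i)"
      by blast
  qed
  with X(2,3) show ?thesis
    using that by blast
qed

lemma in_closure_if_finite_agreement:
  fixes x :: "'a \<Rightarrow> 'b::topological_space"
  assumes "\<And>F. finite F \<Longrightarrow> \<exists>y\<in>C. \<forall>a\<in>F. y a = x a"
  shows "x \<in> closure C"
proof (unfold closure_iff_nhds_not_empty, intro allI impI)
  fix U V assume "V \<subseteq> U" "open V" "x \<in> V"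
  obtain F where "finite F" "cylinder x F \<subseteq> V"
    using open_contains_cylinder[OF \<open>open V\<close> \<open>x \<in> V\<close>] by blast
  with assms \<open>V \<subseteq> U\<close> show "C \<inter> U \<noteq> {}"
    unfolding cylinder_def by blast
qed

lemma continuous_on_if_coordinates_finitely_determined:
  fixes G :: "('a \<Rightarrow> 'b::discrete_topology) \<Rightarrow> 'c \<Rightarrow> 'd::topological_space"
  assumes "\<And>n. \<exists>F. finite F \<and> (\<forall>x y. (\<forall>a\<in>F. y a = x a) \<longrightarrow> G y n = G x n)"
  shows "continuous_on S G"
proof (rule continuous_on_coordinatewise_then_product)
  fix n
  obtain F where F: "finite F" "\<And>x y. \<forall>a\<in>F. y a = x a \<Longrightarrow> G y n = G x n"
    using assms by blast
  show "continuous_on S (\<lambda>x. G x n)"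
    unfolding continuous_on_topological
  proof clarify
    fix x B assume "open B" "G x n \<in> B"
    have "G y n \<in> B" if "y \<in> cylinder x F" for y
      using F(2)[of x y] that \<open>G x n \<in> B\<close> by (simp add: cylinder_def)
    moreover have "x \<in> cylinder x F"
      by (simp add: cylinder_def)
    ultimately show "\<exists>A. open A \<and> x \<in> A \<and> (\<forall>y\<in>S. y \<in> A \<longrightarrow> G y n \<in> B)"
      using open_cylinder[OF F(1)] by blast
  qed
qed

lemma continuous_on_closure_attains_coordinate:
  fixes \<Gamma> :: "'a::topological_space \<Rightarrow> 'i \<Rightarrow> 'd::discrete_topology"
  assumes "continuous_on L \<Gamma>" "x \<in> L" "x \<in> closure C" "C \<subseteq> L"
  shows "\<exists>y\<in>C. \<Gamma> y i = \<Gamma> x i"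
proof -
  have "continuous_on L (\<lambda>y. \<Gamma> y i)"
    using assms(1) by (rule continuous_on_product_then_coordinatewise)
  then obtain U where U: "open U" "U \<inter> L = (\<lambda>y. \<Gamma> y i) -` {\<Gamma> x i} \<inter> L"
    using open_discrete[of "{\<Gamma> x i}"] unfolding continuous_on_open_invariant by blast
  then have "x \<in> U"
    using assms(2) by blast
  then have "U \<inter> C \<noteq> {}"
    using open_Int_closure_eq_empty[OF U(1)] assms(3) by blast
  then show ?thesis
    using U(2) assms(4) by blast
qed

lemma iso_refl: "iso D D"
  unfolding iso_def by (rule exI[of _ id]) simp

lemma iso_sym:
  assumes "iso D D'"
  shows "iso D' D"
proof -
  obtain f where f: "bij f" "\<And>i xs. D (i, xs) = D' (i, map f xs)"
    using assms iso_def by blast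
  have "D' (i, ys) = D (i, map (inv f) ys)" for i ys
    using f by (simp add: bij_is_surj surj_f_inv_f comp_def)
  then show ?thesis
    unfolding iso_def using bij_imp_bij_inv[OF f(1)] by blast
qed

lemma iso_trans:
  assumes "iso D D'" "iso D' D''"
  shows "iso D D''"
proof -
  obtain f where f: "bij f" "\<And>i xs. D (i, xs) = D' (i, map f xs)"
    using assms(1) iso_def by blast
  obtain g where g: "bij g" "\<And>i xs. D' (i, xs) = D'' (i, map g xs)"
    using assms(2) iso_def by blast
  have "D (i, xs) = D'' (i, map (g \<circ> f) xs)" for i xs
    using f g by simp
  then show ?thesis
    unfolding iso_def using bij_comp[OF f(1) g(1)] by blast
qed

lemma family_subset_LD:
  assumes "family sig K"
  shows "K \<subseteq> LD sig K"
proof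
  fix A assume "A \<in> K"
  with assms have "is_structure sig A"
    by (simp add: family_def)
  with \<open>A \<in> K\<close> show "A \<in> LD sig K"
    unfolding LD_def using iso_refl by blast
qed

lemma iso_in_LD_pair_iff:
  assumes "S \<in> LD sig {A, B}" "S' \<in> LD sig {A, B}"
  shows "iso S S' \<longleftrightarrow> (iso S A \<longleftrightarrow> iso S' A)"
proof
  assume "iso S S'"
  then show "iso S A \<longleftrightarrow> iso S' A"
    by (meson iso_sym iso_trans)
next
  assume same: "iso S A \<longleftrightarrow> iso S' A"
  have "iso S A \<or> iso S B" "iso S' A \<or> iso S' B"
    using assms unfolding LD_def by auto
  then consider "iso S A" "iso S' A" | "iso S B" "iso S' B"
    using same by blast
  then show "iso S S'"
    by cases (meson iso_sym iso_trans)+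
qed

definition learns ::
    "((nat \<Rightarrow> nat) \<Rightarrow> (nat \<Rightarrow> nat) \<Rightarrow> bool) \<Rightarrow> nat list \<Rightarrow> diagram set \<Rightarrow> (diagram \<Rightarrow> nat \<Rightarrow> nat) \<Rightarrow> bool"
  where "learns E sig K \<Gamma> \<longleftrightarrow> continuous_on (LD sig K) \<Gamma> \<and>
           (\<forall>S\<in>LD sig K. \<forall>S'\<in>LD sig K. iso S S' \<longleftrightarrow> E (\<Gamma> S) (\<Gamma> S'))"

lemma learnable_iff_learns: "learnable E sig K \<longleftrightarrow> (\<exists>\<Gamma>. learns E sig K \<Gamma>)"
  by (simp add: learnable_def learns_def)

lemma E0_iff_eventually: "E0 p q \<longleftrightarrow> eventually (\<lambda>n. p n = q n) sequentially"
  by (simp add: E0_def eventually_sequentially)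

lemma E0_iff_eq_limits:
  assumes "eventually (\<lambda>n. p n = a) sequentially" "eventually (\<lambda>n. q n = b) sequentially"
  shows "E0 p q \<longleftrightarrow> a = b"
proof
  assume "E0 p q"
  then have "eventually (\<lambda>n. p n = q n) sequentially"
    by (simp add: E0_iff_eventually)
  with assms have "eventually (\<lambda>n. a = b) sequentially"
    by eventually_elim simp
  then show "a = b"
    by simp
next
  assume "a = b"
  from assms have "eventually (\<lambda>n. p n = q n) sequentially"
    by eventually_elim (simp add: \<open>a = b\<close>)
  then show "E0 p q"
    by (simp add: E0_iff_eventually)
qed

section \<open>From \<open>E\<^sub>r\<^sub>a\<^sub>n\<^sub>g\<^sub>e\<close>-learners to \<open>E\<^sub>0\<close>-learners\<close>

lemma finite_sets_separated_by_initial_segment: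
  fixes \<R> :: "nat set set"
  assumes "finite \<R>"
  obtains N where "inj_on (\<lambda>R. R \<inter> {..N}) \<R>"
proof -
  have "eventually (\<lambda>N. R \<inter> {..N} = R' \<inter> {..N} \<longrightarrow> R = R') sequentially" for R R' :: "nat set"
  proof (cases "R = R'")
    case False
    then obtain v where v: "(v \<in> R) \<noteq> (v \<in> R')"
      by blast
    show ?thesis
      using eventually_ge_at_top[of v] by eventually_elim (use v in auto)
  qed simp
  then have "eventually (\<lambda>N. \<forall>R\<in>\<R>. \<forall>R'\<in>\<R>. R \<inter> {..N} = R' \<inter> {..N} \<longrightarrow> R = R') sequentially"
    using assms by (simp add: eventually_ball_finite)
  then obtain N where "\<forall>R\<in>\<R>. \<forall>R'\<in>\<R>. R \<inter> {..N} = R' \<inter> {..N} \<longrightarrow> R = R'"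
    using eventually_happens'[OF sequentially_bot] by blast
  then show ?thesis
    using that by (simp add: inj_on_def)
qed

lemma eventually_image_atMost_Int_eq:
  fixes p :: "nat \<Rightarrow> 'a"
  assumes "finite A"
  shows "eventually (\<lambda>n. p ` {..n} \<inter> A = range p \<inter> A) sequentially"
proof -
  have "eventually (\<lambda>n. v \<in> p ` {..n}) sequentially" if "v \<in> range p" for v
  proof -
    obtain k where k: "v = p k"
      using \<open>v \<in> range p\<close> by blast
    show ?thesis
      using eventually_ge_at_top[of k] by eventually_elim (auto simp: k)
  qed
  then have "eventually (\<lambda>n. \<forall>v\<in>range p \<inter> A. v \<in> p ` {..n}) sequentially"
    using assms by (intro eventually_ball_finite) auto
  then show ?thesis
    by eventually_elim blast
qed

lemma learnable_E0_if_Erange_learner_has_finitely_many_ranges: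
  assumes learner: "learns Erange sig K \<Gamma>"
    and finite_ranges: "finite ((\<lambda>S. range (\<Gamma> S)) ` LD sig K)"
  shows "learnable E0 sig K"
proof -
  obtain N where N: "inj_on (\<lambda>R. R \<inter> {..N}) ((\<lambda>S. range (\<Gamma> S)) ` LD sig K)"
    using finite_sets_separated_by_initial_segment[OF finite_ranges] by blast
  define code :: "(nat \<Rightarrow> nat) \<Rightarrow> nat \<Rightarrow> nat"
    where "code f n = set_encode (f ` {..n} \<inter> {..N})" for f n
  have "continuous_on UNIV code"
  proof (rule continuous_on_if_coordinates_finitely_determined)
    fix n
    have "code g n = code f n" if "\<forall>m\<in>{..n}. g m = f m" for f g
    proof -
      have "g ` {..n} = f ` {..n}"
        using that by (intro image_cong) auto
      then show ?thesis
        by (simp add: code_def)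
    qed
    then show "\<exists>F. finite F \<and> (\<forall>f g. (\<forall>m\<in>F. g m = f m) \<longrightarrow> code g n = code f n)"
      by blast
  qed
  moreover have "continuous_on (LD sig K) \<Gamma>"
    using learner by (simp add: learns_def)
  ultimately have continuous: "continuous_on (LD sig K) (code \<circ> \<Gamma>)"
    using continuous_on_compose continuous_on_subset subset_UNIV by metis
  have equivalence: "iso S S' \<longleftrightarrow> E0 ((code \<circ> \<Gamma>) S) ((code \<circ> \<Gamma>) S')"
    if S: "S \<in> LD sig K" and S': "S' \<in> LD sig K" for S S'
  proof -
    have limit: "eventually (\<lambda>n. code (\<Gamma> T) n = set_encode (range (\<Gamma> T) \<inter> {..N})) sequentially" for T
      using eventually_image_atMost_Int_eq[OF finite_atMost, of "\<Gamma> T" N]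
      by eventually_elim (simp add: code_def)
    have "E0 (code (\<Gamma> S)) (code (\<Gamma> S')) \<longleftrightarrow>
          set_encode (range (\<Gamma> S) \<inter> {..N}) = set_encode (range (\<Gamma> S') \<inter> {..N})"
      by (rule E0_iff_eq_limits[OF limit limit])
    also have "\<dots> \<longleftrightarrow> range (\<Gamma> S) \<inter> {..N} = range (\<Gamma> S') \<inter> {..N}"
      by (simp add: set_encode_eq)
    also have "\<dots> \<longleftrightarrow> range (\<Gamma> S) = range (\<Gamma> S')"
      using S S' by (intro inj_on_eq_iff[OF N]) auto
    also have "\<dots> \<longleftrightarrow> iso S S'"
      using learner S S' by (simp add: learns_def Erange_def)
    finally show ?thesis
      by simp
  qed
  have "learns E0 sig K (code \<circ> \<Gamma>)"
    unfolding learns_def using continuous equivalence by blast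
  then show ?thesis
    unfolding learnable_iff_learns by blast
qed

lemma learnable_E0_if_learnable_Erange:
  assumes "finite K" "family sig K" "learnable Erange sig K"
  shows "learnable E0 sig K"
proof -
  obtain \<Gamma> where learner: "learns Erange sig K \<Gamma>"
    using assms(3) learnable_iff_learns by blast
  have "range (\<Gamma> S) \<in> (\<lambda>A. range (\<Gamma> A)) ` K" if "S \<in> LD sig K" for S
  proof -
    obtain A where "A \<in> K" "iso S A"
      using \<open>S \<in> LD sig K\<close> unfolding LD_def by blast
    moreover have "A \<in> LD sig K"
      using \<open>A \<in> K\<close> family_subset_LD[OF assms(2)] by blast
    ultimately have "range (\<Gamma> S) = range (\<Gamma> A)"
      using learner \<open>S \<in> LD sig K\<close> by (simp add: learns_def Erange_def)
    with \<open>A \<in> K\<close> show ?thesis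
      by blast
  qed
  then have "(\<lambda>S. range (\<Gamma> S)) ` LD sig K \<subseteq> (\<lambda>A. range (\<Gamma> A)) ` K"
    by blast
  then have "finite ((\<lambda>S. range (\<Gamma> S)) ` LD sig K)"
    using assms(1) by (rule finite_subset[OF _ finite_imageI])
  with learner show ?thesis
    by (rule learnable_E0_if_Erange_learner_has_finitely_many_ranges)
qed

section \<open>Mutually approximable structures\<close>

lemma Erange_learner_range_subset:
  assumes learner: "learns Erange sig K \<Gamma>"
    and A: "A \<in> LD sig K" and B: "B \<in> LD sig K"
    and approx: "A \<in> closure {S \<in> LD sig K. iso S B}"
  shows "range (\<Gamma> A) \<subseteq> range (\<Gamma> B)"
proof
  fix v assume "v \<in> range (\<Gamma> A)"
  then obtain m where m: "v = \<Gamma> A m"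
    by blast
  have "continuous_on (LD sig K) \<Gamma>"
    using learner by (simp add: learns_def)
  then have "\<exists>S\<in>{S \<in> LD sig K. iso S B}. \<Gamma> S m = \<Gamma> A m"
    by (rule continuous_on_closure_attains_coordinate[OF _ A approx]) blast
  then obtain S where S: "S \<in> LD sig K" "iso S B" "\<Gamma> S m = v"
    using m by blast
  then have "range (\<Gamma> S) = range (\<Gamma> B)"
    using learner B by (simp add: learns_def Erange_def)
  then show "v \<in> range (\<Gamma> B)"
    using S(3) by (metis rangeI)
qed

lemma not_learnable_Erange_if_mutually_approximable:
  assumes A: "A \<in> LD sig K" and B: "B \<in> LD sig K" and "\<not> iso A B"
    and "A \<in> closure {S \<in> LD sig K. iso S B}" "B \<in> closure {S \<in> LD sig K. iso S A}"
  shows "\<not> learnable Erange sig K"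
proof
  assume "learnable Erange sig K"
  then obtain \<Gamma> where learner: "learns Erange sig K \<Gamma>"
    by (auto simp: learnable_iff_learns)
  have "range (\<Gamma> A) = range (\<Gamma> B)"
    using Erange_learner_range_subset[OF learner A B assms(4)]
      Erange_learner_range_subset[OF learner B A assms(5)] by (rule subset_antisym)
  then show False
    using learner A B \<open>\<not> iso A B\<close> by (simp add: learns_def Erange_def)
qed

definition relabel :: "diagram \<Rightarrow> (nat \<Rightarrow> nat) \<Rightarrow> diagram" where
  "relabel D g = (\<lambda>(i, xs). D (i, map g xs))"

lemma iso_relabel: "bij g \<Longrightarrow> iso (relabel D g) D"
  unfolding iso_def relabel_def by auto

lemma relabel_in_LD:
  assumes "bij g" "D \<in> LD sig K"
  shows "relabel D g \<in> LD sig K"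
proof -
  have "is_structure sig D"
    using assms(2) by (simp add: LD_def)
  then have "is_structure sig (relabel D g)"
    unfolding is_structure_def relabel_def by (metis case_prod_conv length_map)
  moreover obtain A where "A \<in> K" "iso D A"
    using assms(2) unfolding LD_def by blast
  ultimately show ?thesis
    unfolding LD_def using iso_trans[OF iso_relabel[OF assms(1)]] by blast
qed

lemma in_closure_copies_if_relabellings_agree:
  assumes B: "B \<in> LD sig K"
    and agree: "\<And>F. finite F \<Longrightarrow> \<exists>g. bij g \<and> (\<forall>a\<in>F. relabel B g a = A a)"
  shows "A \<in> closure {S \<in> LD sig K. iso S B}"
proof (rule in_closure_if_finite_agreement)
  fix F :: "(nat \<times> nat list) set"
  assume "finite F"
  then obtain g where "bij g" "\<forall>a\<in>F. relabel B g a = A a"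
    using agree by blast
  then show "\<exists>S\<in>{S \<in> LD sig K. iso S B}. \<forall>a\<in>F. S a = A a"
    using relabel_in_LD[OF _ B] iso_relabel by blast
qed

section \<open>The orders \<open>\<omega>\<close> and \<open>\<omega>\<^sup>*\<close>\<close>

definition below_zero :: "diagram \<Rightarrow> nat set" where
  "below_zero S = {x. S (0, [x, 0])}"

definition above_zero :: "diagram \<Rightarrow> nat set" where
  "above_zero S = {x. S (0, [0, x])}"

lemma iso_omega_cuts:
  assumes "iso S omega"
  shows "finite (below_zero S)" "infinite (above_zero S)"
proof -
  obtain f where f: "bij f" "\<And>i xs. S (i, xs) = omega (i, map f xs)"
    using assms iso_def by blast
  have "below_zero S = f -` {..f 0}" "above_zero S = f -` {f 0..}"
    using f(2) by (auto simp: below_zero_def above_zero_def omega_def)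
  then show "finite (below_zero S)" "infinite (above_zero S)"
    using finite_vimage_iff[OF f(1)] infinite_Ici by simp_all
qed

lemma iso_omega_star_cuts:
  assumes "iso S omega_star"
  shows "infinite (below_zero S)" "finite (above_zero S)"
proof -
  obtain f where f: "bij f" "\<And>i xs. S (i, xs) = omega_star (i, map f xs)"
    using assms iso_def by blast
  have "below_zero S = f -` {f 0..}" "above_zero S = f -` {..f 0}"
    using f(2) by (auto simp: below_zero_def above_zero_def omega_star_def)
  then show "infinite (below_zero S)" "finite (above_zero S)"
    using finite_vimage_iff[OF f(1)] infinite_Ici by simp_all
qed

lemma not_iso_omega_omega_star: "\<not> iso omega omega_star"
  using iso_omega_cuts(1)[OF iso_refl] iso_omega_star_cuts(1) by blast

lemma family_omega_omega_star: "family order_sig {omega, omega_star}"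
proof -
  have "is_structure order_sig omega" "is_structure order_sig omega_star"
    unfolding is_structure_def omega_def omega_star_def order_sig_def by auto
  moreover have "\<not> iso omega_star omega"
    using not_iso_omega_omega_star iso_sym by blast
  ultimately show ?thesis
    unfolding family_def using not_iso_omega_omega_star by (auto simp: countable_finite)
qed

lemma eventually_card_Int_atMost_less:
  fixes A B :: "nat set"
  assumes "finite A" "infinite B"
  shows "eventually (\<lambda>n. card (A \<inter> {..n}) < card (B \<inter> {..n})) sequentially"
proof -
  obtain C where C: "finite C" "card C = Suc (card A)" "C \<subseteq> B"
    using infinite_arbitrarily_large[OF assms(2)] by blast
  obtain k where k: "C \<subseteq> {..k}"
    using C(1) finite_nat_iff_bounded_le by blast
  have "eventually (\<lambda>n. C \<subseteq> {..n}) sequentially"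
    using eventually_ge_at_top[of k] by eventually_elim (use k in auto)
  then show ?thesis
  proof eventually_elim
    case (elim n)
    have "card (A \<inter> {..n}) \<le> card A"
      using assms(1) by (simp add: card_mono)
    also have "\<dots> < card C"
      using C(2) by simp
    also have "\<dots> \<le> card (B \<inter> {..n})"
      using C(3) elim by (intro card_mono) auto
    finally show ?case .
  qed
qed

definition order_learner :: "diagram \<Rightarrow> nat \<Rightarrow> nat" where
  "order_learner S n = (if card (below_zero S \<inter> {..n}) < card (above_zero S \<inter> {..n}) then 0 else 1)"

lemma continuous_on_order_learner: "continuous_on X order_learner"
proof (rule continuous_on_if_coordinates_finitely_determined)
  fix n
  let ?F = "(\<lambda>x. (0, [x, 0])) ` {..n} \<union> (\<lambda>x. (0, [0, x])) ` {..n} :: (nat \<times> nat list) set"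
  have "order_learner T n = order_learner S n" if "\<forall>a\<in>?F. T a = S a" for S T :: diagram
  proof -
    have "below_zero T \<inter> {..n} = below_zero S \<inter> {..n}" "above_zero T \<inter> {..n} = above_zero S \<inter> {..n}"
      using that by (auto simp: below_zero_def above_zero_def)
    then show ?thesis
      by (simp add: order_learner_def)
  qed
  moreover have "finite ?F"
    by simp
  ultimately show "\<exists>F. finite F \<and> (\<forall>S T. (\<forall>a\<in>F. T a = S a) \<longrightarrow> order_learner T n = order_learner S n)"
    by blast
qed

lemma eventually_order_learner_omega:
  assumes "iso S omega"
  shows "eventually (\<lambda>n. order_learner S n = 0) sequentially"
  using eventually_card_Int_atMost_less[OF iso_omega_cuts[OF assms]]
  by eventually_elim (simp add: order_learner_def)

lemma eventually_order_learner_omega_star: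
  assumes "iso S omega_star"
  shows "eventually (\<lambda>n. order_learner S n = 1) sequentially"
  using eventually_card_Int_atMost_less[OF iso_omega_star_cuts(2,1)[OF assms]]
  by eventually_elim (simp add: order_learner_def)

lemma learnable_E0_omega_omega_star: "learnable E0 order_sig {omega, omega_star}"
proof -
  let ?L = "LD order_sig {omega, omega_star}"
  define limit :: "diagram \<Rightarrow> nat" where "limit S = (if iso S omega then 0 else 1)" for S
  have limit: "eventually (\<lambda>n. order_learner S n = limit S) sequentially" if "S \<in> ?L" for S
  proof (cases "iso S omega")
    case True
    then show ?thesis
      using eventually_order_learner_omega by (simp add: limit_def)
  next
    case False
    then have "iso S omega_star"
      using that by (simp add: LD_def)
    with False show ?thesis
      using eventually_order_learner_omega_star by (simp add: limit_def)
  qed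
  have "iso S S' \<longleftrightarrow> E0 (order_learner S) (order_learner S')" if "S \<in> ?L" "S' \<in> ?L" for S S'
    using iso_in_LD_pair_iff[OF that] E0_iff_eq_limits[OF limit[OF that(1)] limit[OF that(2)]]
    by (simp add: limit_def)
  then have "learns E0 order_sig {omega, omega_star} order_learner"
    unfolding learns_def using continuous_on_order_learner by blast
  then show ?thesis
    unfolding learnable_iff_learns by blast
qed

definition reverse_upto :: "nat \<Rightarrow> nat \<Rightarrow> nat" where
  "reverse_upto N x = (if x \<le> N then N - x else x)"

lemma bij_reverse_upto: "bij (reverse_upto N)"
  by (rule involuntory_imp_bij) (simp add: reverse_upto_def)

lemma relabel_reverse_upto_omega_omega_star:
  assumes "set xs \<subseteq> {..N}"
  shows "relabel omega_star (reverse_upto N) (i, xs) = omega (i, xs)"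
    and "relabel omega (reverse_upto N) (i, xs) = omega_star (i, xs)"
proof -
  have "xs ! 0 \<le> N \<and> xs ! 1 \<le> N" if "length xs = 2"
  proof -
    have "xs ! 0 \<in> set xs" "xs ! 1 \<in> set xs"
      using that by simp_all
    with assms show ?thesis
      by auto
  qed
  then show "relabel omega_star (reverse_upto N) (i, xs) = omega (i, xs)"
    and "relabel omega (reverse_upto N) (i, xs) = omega_star (i, xs)"
    unfolding relabel_def omega_def omega_star_def reverse_upto_def by auto
qed

lemma finite_atoms_bounded:
  assumes "finite (F :: (nat \<times> nat list) set)"
  obtains N where "\<And>i xs. (i, xs) \<in> F \<Longrightarrow> set xs \<subseteq> {..N}"
proof -
  have "finite (\<Union>a\<in>F. set (snd a))"
    using assms by simp
  then obtain N where N: "(\<Union>a\<in>F. set (snd a)) \<subseteq> {..N}"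
    using finite_nat_iff_bounded_le by blast
  have "set xs \<subseteq> {..N}" if "(i, xs) \<in> F" for i xs
    using N that by force
  then show ?thesis
    by (rule that)
qed

lemma reversal_approximates_omega_omega_star:
  assumes "finite F"
  obtains N where "\<forall>a\<in>F. relabel omega_star (reverse_upto N) a = omega a"
    and "\<forall>a\<in>F. relabel omega (reverse_upto N) a = omega_star a"
proof -
  obtain N where "\<And>i xs. (i, xs) \<in> F \<Longrightarrow> set xs \<subseteq> {..N}"
    using finite_atoms_bounded[OF assms] by blast
  then have "\<forall>a\<in>F. relabel omega_star (reverse_upto N) a = omega a"
    and "\<forall>a\<in>F. relabel omega (reverse_upto N) a = omega_star a"
    using relabel_reverse_upto_omega_omega_star by auto
  then show ?thesis
    by (rule that)
qed

lemma not_learnable_Erange_omega_omega_star: "\<not> learnable Erange order_sig {omega, omega_star}"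
proof -
  let ?L = "LD order_sig {omega, omega_star}"
  have in_L: "omega \<in> ?L" "omega_star \<in> ?L"
    using family_subset_LD[OF family_omega_omega_star] by auto
  have "\<exists>g. bij g \<and> (\<forall>a\<in>F. relabel omega_star g a = omega a)"
    and "\<exists>g. bij g \<and> (\<forall>a\<in>F. relabel omega g a = omega_star a)" if "finite F" for F
    using reversal_approximates_omega_omega_star[OF that] bij_reverse_upto by metis+
  then have "omega \<in> closure {S \<in> ?L. iso S omega_star}"
    and "omega_star \<in> closure {S \<in> ?L. iso S omega}"
    by (intro in_closure_copies_if_relabellings_agree in_L; blast)+
  then show ?thesis
    by (rule not_learnable_Erange_if_mutually_approximable[OF in_L not_iso_omega_omega_star])
qed

theorem mainTheorem7:
  shows "(\<forall>(sig :: nat list) (K :: diagram set).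
            finite K \<and> family sig K \<and> learnable Erange sig K \<longrightarrow> learnable E0 sig K)
       \<and> (finite {omega, omega_star} \<and> family order_sig {omega, omega_star}
          \<and> learnable E0 order_sig {omega, omega_star}
          \<and> \<not> learnable Erange order_sig {omega, omega_star})"
proof (intro conjI allI impI)
  fix sig :: "nat list" and K :: "diagram set"
  assume "finite K \<and> family sig K \<and> learnable Erange sig K"
  then show "learnable E0 sig K"
    using learnable_E0_if_learnable_Erange by blast
qed (simp_all add: family_omega_omega_star learnable_E0_omega_omega_star
      not_learnable_Erange_omega_omega_star)

end
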